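(* For every integer $k \ge 4$, $\gamma(k) \ge 5\cdot 2^{k-2} - 1$.
   Context: For words $C,S$, $C$ is an \emph{s-cover} of $S$ if for every position $i$ of $S$ there exist indices $j_0<\dots<j_{|C|-1}$ with $S[j_t]=C[t]$ for all $t$ and $i\in\{j_0,\dots,j_{|C|-1}\}$. An s-cover $C$ of $S$ is \emph{non-trivial} if $|C|<|S|$; a word is \emph{s-primitive} if it has no non-trivial s-cover. $\gamma(k)$ is the maximum length of an s-primitive word over an alphabet of size $k$. *)

theory Defs
  imports Main "HOL-Library.Extended_Nat"
begin

definition s_cover :: "'a list \<Rightarrow> 'a list \<Rightarrow> bool" where
  "s_cover C S \<longleftrightarrow>
     (\<forall>i < length S. \<exists>j :: nat \<Rightarrow> nat.
        (\<forall>t. Suc t < length C \<longrightarrow> j t < j (Suc t)) \<and>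
        (\<forall>t < length C. j t < length S \<and> S ! (j t) = C ! t) \<and>
        (\<exists>t < length C. j t = i))"

definition nontrivial_s_cover :: "'a list \<Rightarrow> 'a list \<Rightarrow> bool" where
  "nontrivial_s_cover C S \<longleftrightarrow> s_cover C S \<and> length C < length S"

definition s_primitive :: "'a list \<Rightarrow> bool" where
  "s_primitive S \<longleftrightarrow> \<not> (\<exists>C. nontrivial_s_cover C S)"

text \<open>Alphabet of size k: the letters 0..k-1. gamma k is the supremum (maximum)
of lengths of s-primitive words over it, taken in enat so no finiteness is presupposed.\<close>

definition gamma :: "nat \<Rightarrow> enat" where
  "gamma k = Sup {enat (length w) | w :: nat list. set w \<subseteq> {0..<k} \<and> s_primitive w}"

end

theory Submission
  imports Defs "HOL-Library.Sublist"
begin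

(* If a letter a occurs in neither u nor v, an s-cover C of u a v must contain a, so
   C = C1 a C2 with C1, C2 free of a; since every occurrence of C in u a v then matches this a
   with the unique a, C1 is an s-cover of u and C2 one of v. Hence u a v is s-primitive
   whenever u and v are. Doubling w to w a w with a fresh letter a therefore turns an
   s-primitive word of length 5 * 2^(k-2) - 1 over k letters into one of length
   5 * 2^(k-1) - 1 over k + 1 letters. The induction starts from an s-primitive word of
   length 19 over 4 letters, certified by an exhaustive search for shorter covers. *)

definition index_embedding :: "(nat \<Rightarrow> nat) \<Rightarrow> 'a list \<Rightarrow> 'a list \<Rightarrow> bool" where
  "index_embedding j xs ys \<longleftrightarrow>
     (\<forall>t. Suc t < length xs \<longrightarrow> j t < j (Suc t)) \<and>
     (\<forall>t < length xs. j t < length ys \<and> ys ! j t = xs ! t)"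

lemma index_embedding_less:
  assumes "index_embedding j xs ys" "s < t" "t < length xs"
  shows "j s < j t"
  using assms(2,3)
proof (induction t)
  case (Suc t)
  then show ?case
    using assms(1) unfolding index_embedding_def by (metis Suc_lessD less_Suc_eq order.strict_trans)
qed simp

lemma index_embedding_append_ConsD:
  assumes emb: "index_embedding j (C1 @ c # C2) (S1 @ s # S2)" and mid: "j (length C1) = length S1"
  shows "c = s" "index_embedding j C1 S1"
    "index_embedding (\<lambda>t. j (Suc (length C1 + t)) - Suc (length S1)) C2 S2"
proof -
  have step: "j t < j (Suc t)" if "Suc t < length C1 + Suc (length C2)" for t
    using emb that unfolding index_embedding_def by simp
  have val: "j t < length S1 + Suc (length S2) \<and> (S1 @ s # S2) ! j t = (C1 @ c # C2) ! t"
    if "t < length C1 + Suc (length C2)" for t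
    using emb that unfolding index_embedding_def by simp
  have before: "j t < length S1" if "t < length C1" for t
    using index_embedding_less[OF emb that] mid by simp
  have after: "length S1 < j (Suc (length C1 + t))" if "t < length C2" for t
    using index_embedding_less[OF emb, of "length C1" "Suc (length C1 + t)"] mid that by simp
  show "c = s"
    using val[of "length C1"] mid by simp
  show "index_embedding j C1 S1"
    unfolding index_embedding_def
  proof (rule conjI; intro allI impI)
    fix t assume "t < length C1"
    then show "j t < length S1 \<and> S1 ! j t = C1 ! t"
      using val[of t] before[of t] by (simp add: nth_append)
  qed (use step in simp)
  show "index_embedding (\<lambda>t. j (Suc (length C1 + t)) - Suc (length S1)) C2 S2"
    unfolding index_embedding_def
  proof (rule conjI; intro allI impI)
    fix t assume "Suc t < length C2"
    then show "j (Suc (length C1 + t)) - Suc (length S1)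
        < j (Suc (length C1 + Suc t)) - Suc (length S1)"
      using step[of "Suc (length C1 + t)"] after[of t] by simp
  next
    fix t assume t: "t < length C2"
    define x where "x = Suc (length C1 + t)"
    have "j x < length S1 + Suc (length S2)" "(S1 @ s # S2) ! j x = C2 ! t" "length S1 < j x"
      using val[of x] after[OF t] t unfolding x_def by (simp_all add: nth_append)
    then show "j x - Suc (length S1) < length S2 \<and> S2 ! (j x - Suc (length S1)) = C2 ! t"
      by (simp add: nth_append nth_Cons')
  qed
qed

lemma index_embedding_append_ConsI:
  assumes emb1: "index_embedding j1 C1 S1" and emb2: "index_embedding j2 C2 S2"
  shows "\<exists>j. index_embedding j (C1 @ c # C2) (S1 @ c # S2) \<and> j (length C1) = length S1"
proof -
  define j where "j t = (if t < length C1 then j1 t else if t = length C1 then length S1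
    else Suc (length S1 + j2 (t - Suc (length C1))))" for t
  have "index_embedding j (C1 @ c # C2) (S1 @ c # S2)"
    unfolding index_embedding_def
  proof (rule conjI; intro allI impI)
    fix t assume t: "Suc t < length (C1 @ c # C2)"
    consider "Suc t < length C1" | "Suc t = length C1" | "t = length C1"
      | m where "t = Suc (length C1 + m)"
      by (metis less_Suc_eq less_imp_Suc_add linorder_neqE_nat)
    then show "j t < j (Suc t)"
    proof cases
      case 4
      then show ?thesis using t emb2 unfolding index_embedding_def j_def by simp
    qed (use emb1 in \<open>auto simp: index_embedding_def j_def\<close>)
  next
    fix t assume "t < length (C1 @ c # C2)"
    then show "j t < length (S1 @ c # S2) \<and> (S1 @ c # S2) ! j t = (C1 @ c # C2) ! t"
      using emb1 emb2 unfolding index_embedding_def j_def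
      by (auto simp: nth_append nth_Cons')
  qed
  moreover have "j (length C1) = length S1"
    by (simp add: j_def)
  ultimately show ?thesis by blast
qed

lemma subseq_iff_index_embedding: "subseq C S \<longleftrightarrow> (\<exists>j. index_embedding j C S)"
proof (induction C arbitrary: S)
  case Nil
  then show ?case by (simp add: index_embedding_def)
next
  case (Cons c C)
  show ?case
  proof
    assume "subseq (c # C) S"
    then obtain S1 S2 where "S = S1 @ c # S2" "subseq C S2"
      by (auto dest: list_emb_ConsD)
    moreover obtain j2 where "index_embedding j2 C S2"
      using Cons.IH \<open>subseq C S2\<close> by blast
    moreover have "index_embedding j2 [] S1"
      by (simp add: index_embedding_def)
    ultimately show "\<exists>j. index_embedding j (c # C) S"
      using index_embedding_append_ConsI[of j2 "[]" S1 j2 C S2 c] by auto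
  next
    assume "\<exists>j. index_embedding j (c # C) S"
    then obtain j where emb: "index_embedding j ([] @ c # C) S" by auto
    define p where "p = j 0"
    have "p < length S"
      using emb unfolding index_embedding_def p_def by auto
    then have S: "S = take p S @ S ! p # drop (Suc p) S"
      by (simp add: id_take_nth_drop)
    have "length (take p S) = p"
      using \<open>p < length S\<close> by simp
    then have "c = S ! p" "\<exists>j. index_embedding j C (drop (Suc p) S)"
      using index_embedding_append_ConsD[of j "[]" c C "take p S" "S ! p" "drop (Suc p) S"]
        emb S unfolding p_def by auto
    then have "subseq (c # C) (S ! p # drop (Suc p) S)"
      using Cons.IH by simp
    then show "subseq (c # C) S"
      using S by (metis list_emb_append2)
  qed
qed

definition covers_at :: "'a list \<Rightarrow> 'a list \<Rightarrow> nat \<Rightarrow> bool" where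
  "covers_at C S i \<longleftrightarrow> (\<exists>t < length C. C ! t = S ! i \<and>
     subseq (take t C) (take i S) \<and> subseq (drop (Suc t) C) (drop (Suc i) S))"

lemma covers_at_iff_append_Cons:
  "covers_at C S i \<longleftrightarrow>
     (\<exists>C1 C2. C = C1 @ S ! i # C2 \<and> subseq C1 (take i S) \<and> subseq C2 (drop (Suc i) S))"
proof
  assume "covers_at C S i"
  then obtain t where "t < length C" "C ! t = S ! i"
    "subseq (take t C) (take i S)" "subseq (drop (Suc t) C) (drop (Suc i) S)"
    unfolding covers_at_def by blast
  then show "\<exists>C1 C2. C = C1 @ S ! i # C2 \<and> subseq C1 (take i S) \<and> subseq C2 (drop (Suc i) S)"
    by (metis id_take_nth_drop)
next
  assume "\<exists>C1 C2. C = C1 @ S ! i # C2 \<and> subseq C1 (take i S) \<and> subseq C2 (drop (Suc i) S)"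
  then obtain C1 C2 where "C = C1 @ S ! i # C2" "subseq C1 (take i S)" "subseq C2 (drop (Suc i) S)"
    by blast
  then show "covers_at C S i"
    unfolding covers_at_def by (intro exI[of _ "length C1"]) simp
qed

lemma covers_at_iff_index_embedding:
  assumes "i < length S"
  shows "covers_at C S i \<longleftrightarrow> (\<exists>j. index_embedding j C S \<and> (\<exists>t < length C. j t = i))"
proof -
  have S: "S = take i S @ S ! i # drop (Suc i) S" and len: "length (take i S) = i"
    using assms by (simp_all add: id_take_nth_drop)
  show ?thesis
  proof
    assume "covers_at C S i"
    then obtain C1 C2 where C: "C = C1 @ S ! i # C2"
      and "subseq C1 (take i S)" "subseq C2 (drop (Suc i) S)"
      unfolding covers_at_iff_append_Cons by blast
    then obtain j1 j2
      where "index_embedding j1 C1 (take i S)" "index_embedding j2 C2 (drop (Suc i) S)"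
      unfolding subseq_iff_index_embedding by blast
    then obtain j where "index_embedding j C S" "j (length C1) = i"
      using index_embedding_append_ConsI[of j1 C1 "take i S" j2 C2 "drop (Suc i) S" "S ! i"]
        C S len by metis
    moreover have "length C1 < length C"
      using C by simp
    ultimately show "\<exists>j. index_embedding j C S \<and> (\<exists>t < length C. j t = i)"
      by blast
  next
    assume "\<exists>j. index_embedding j C S \<and> (\<exists>t < length C. j t = i)"
    then obtain j t where emb: "index_embedding j C S" and t: "t < length C" "j t = i"
      by blast
    have C: "C = take t C @ C ! t # drop (Suc t) C" and "length (take t C) = t"
      using t by (simp_all add: id_take_nth_drop)
    then have "C ! t = S ! i" "index_embedding j (take t C) (take i S)"
      "\<exists>j'. index_embedding j' (drop (Suc t) C) (drop (Suc i) S)"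
      using index_embedding_append_ConsD[of j "take t C" "C ! t" "drop (Suc t) C"
          "take i S" "S ! i" "drop (Suc i) S"] emb t S len by auto
    then show "covers_at C S i"
      unfolding covers_at_def subseq_iff_index_embedding using t by blast
  qed
qed

lemma s_cover_iff_covers_at: "s_cover C S \<longleftrightarrow> (\<forall>i < length S. covers_at C S i)"
  by (simp add: s_cover_def covers_at_iff_index_embedding index_embedding_def)

lemma set_mono_subseq: "subseq xs ys \<Longrightarrow> set xs \<subseteq> set ys"
  by (auto elim: list_emb_set)

lemma subseq_rev: "subseq xs ys \<Longrightarrow> subseq (rev xs) (rev ys)"
  by (induction rule: list_emb.induct) (auto intro: subseq_rev_drop_many)

lemma covers_at_rev:
  assumes "i < length S" "covers_at C S i"
  shows "covers_at (rev C) (rev S) (length S - Suc i)"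
proof -
  obtain C1 C2 where "C = C1 @ S ! i # C2" "subseq C1 (take i S)" "subseq C2 (drop (Suc i) S)"
    using assms(2) unfolding covers_at_iff_append_Cons by blast
  moreover have "rev S ! (length S - Suc i) = S ! i"
    using assms(1) by (simp add: rev_nth)
  moreover have "take (length S - Suc i) (rev S) = rev (drop (Suc i) S)"
    "drop (Suc (length S - Suc i)) (rev S) = rev (take i S)"
    using assms(1) by (simp_all add: take_rev drop_rev Suc_diff_Suc)
  ultimately show ?thesis
    unfolding covers_at_iff_append_Cons by (auto intro!: subseq_rev)
qed

lemma s_cover_rev: "s_cover C S \<Longrightarrow> s_cover (rev C) (rev S)"
  unfolding s_cover_iff_covers_at
proof (intro allI impI)
  fix i assume cov: "\<forall>i<length S. covers_at C S i" and i: "i < length (rev S)"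
  then have "covers_at (rev C) (rev S) (length S - Suc (length S - Suc i))"
    by (intro covers_at_rev) auto
  then show "covers_at (rev C) (rev S) i"
    using i by (simp add: Suc_diff_Suc)
qed

lemma subseq_Cons_not_in_tail:
  assumes "subseq xs (a # ys)" "a \<in> set xs" "a \<notin> set ys"
  obtains xs' where "xs = a # xs'" "subseq xs' ys"
  using assms by (cases rule: list_emb.cases) (auto dest: set_mono_subseq)

lemma s_cover_append_Cons_left:
  assumes cov: "s_cover (C1 @ a # C2) (u @ a # v)" and "a \<notin> set u" "a \<notin> set v"
  shows "s_cover C1 u"
  unfolding s_cover_iff_covers_at
proof (intro allI impI)
  fix i assume i: "i < length u"
  have "covers_at (C1 @ a # C2) (u @ a # v) i"
    using cov i unfolding s_cover_iff_covers_at by simp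
  moreover have "(u @ a # v) ! i = u ! i" "take i (u @ a # v) = take i u"
    "drop (Suc i) (u @ a # v) = drop (Suc i) u @ a # v"
    using i by (simp_all add: nth_append)
  ultimately obtain D1 D2 where D: "C1 @ a # C2 = D1 @ u ! i # D2"
    and "subseq D1 (take i u)" "subseq D2 (drop (Suc i) u @ a # v)"
    unfolding covers_at_iff_append_Cons by auto
  then obtain X1 X2 where X: "D2 = X1 @ X2" "subseq X1 (drop (Suc i) u)" "subseq X2 (a # v)"
    by (auto elim: subseq_appendE)
  have "set D1 \<subseteq> set u" "set X1 \<subseteq> set u" "u ! i \<in> set u"
    using set_mono_subseq[OF \<open>subseq D1 (take i u)\<close>] set_mono_subseq[OF X(2)] i
    by (auto dest: in_set_takeD in_set_dropD)
  then have a_left: "a \<notin> set (D1 @ u ! i # X1)"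
    using assms(2) by auto
  moreover have "a \<in> set (D1 @ u ! i # X1 @ X2)"
    using D X(1) by (metis in_set_conv_decomp)
  ultimately have "a \<in> set X2"
    by auto
  with X(3) obtain Y where "X2 = a # Y" "subseq Y v"
    using assms(3) by (rule subseq_Cons_not_in_tail)
  then have "(D1 @ u ! i # X1) @ a # Y = C1 @ a # C2" "a \<notin> set Y"
    using D X(1) assms(3) by (auto dest: set_mono_subseq)
  then have "C1 = D1 @ u ! i # X1"
    using a_left append_Cons_eq_iff by metis
  then show "covers_at C1 u i"
    unfolding covers_at_iff_append_Cons using \<open>subseq D1 (take i u)\<close> X(2) by blast
qed

lemma s_cover_append_ConsE:
  assumes cov: "s_cover C (u @ a # v)" and a: "a \<notin> set u" "a \<notin> set v"
  obtains C1 C2 where "C = C1 @ a # C2" "s_cover C1 u" "s_cover C2 v"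
proof -
  have "covers_at C (u @ a # v) (length u)"
    using cov unfolding s_cover_iff_covers_at by simp
  then obtain C1 C2 where C: "C = C1 @ a # C2"
    unfolding covers_at_iff_append_Cons by auto
  have "s_cover C1 u"
    using s_cover_append_Cons_left cov a C by metis
  moreover have "s_cover (rev C2 @ a # rev C1) (rev v @ a # rev u)"
    using s_cover_rev[OF cov] C by simp
  then have "s_cover (rev C2) (rev v)"
    using s_cover_append_Cons_left a by (metis set_rev)
  then have "s_cover C2 v"
    using s_cover_rev by fastforce
  ultimately show ?thesis
    using C that by blast
qed

lemma s_primitive_iff: "s_primitive S \<longleftrightarrow> (\<forall>C. s_cover C S \<longrightarrow> length S \<le> length C)"
  unfolding s_primitive_def nontrivial_s_cover_def by auto

lemma s_primitive_append_Cons: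
  assumes "s_primitive u" "s_primitive v" "a \<notin> set u" "a \<notin> set v"
  shows "s_primitive (u @ a # v)"
  unfolding s_primitive_iff
proof (intro allI impI)
  fix C assume "s_cover C (u @ a # v)"
  then obtain C1 C2 where "C = C1 @ a # C2" "s_cover C1 u" "s_cover C2 v"
    using assms(3,4) by (rule s_cover_append_ConsE)
  then show "length (u @ a # v) \<le> length C"
    using assms(1,2) unfolding s_primitive_iff by fastforce
qed

lemma s_cover_imp_subseq:
  assumes "s_cover C S" "S \<noteq> []"
  shows "subseq C S"
proof -
  have "covers_at C S 0"
    using assms unfolding s_cover_iff_covers_at by simp
  then obtain C2 where "C = S ! 0 # C2" "subseq C2 (drop 1 S)"
    unfolding covers_at_iff_append_Cons by (auto dest: list_emb_Nil2)
  moreover have "S = S ! 0 # drop 1 S"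
    using assms(2) by (cases S) simp_all
  ultimately show ?thesis
    by (metis subseq_Cons2)
qed

definition viable_prefix :: "'a list \<Rightarrow> 'a list \<Rightarrow> bool" where
  "viable_prefix P S \<longleftrightarrow> (\<forall>i < length S. subseq P (take i S) \<or> covers_at P S i)"

lemma viable_prefix_take:
  assumes "s_cover C S"
  shows "viable_prefix (take p C) S"
  unfolding viable_prefix_def
proof (intro allI impI)
  fix i assume "i < length S"
  then obtain C1 C2 where C: "C = C1 @ S ! i # C2"
    and C1: "subseq C1 (take i S)" and C2: "subseq C2 (drop (Suc i) S)"
    using assms unfolding s_cover_iff_covers_at covers_at_iff_append_Cons by blast
  show "subseq (take p C) (take i S) \<or> covers_at (take p C) S i"
  proof (cases "p \<le> length C1")
    case True
    then have "subseq (take p C) C1"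
      using C by (simp add: prefix_imp_subseq take_is_prefix)
    then show ?thesis
      using C1 by (auto intro: subseq_order.order_trans)
  next
    case False
    then have "take p C = C1 @ S ! i # take (p - Suc (length C1)) C2"
      using C by (simp add: take_Cons')
    moreover have "subseq (take (p - Suc (length C1)) C2) (drop (Suc i) S)"
      using C2 by (auto intro: subseq_order.order_trans take_is_prefix)
    ultimately show ?thesis
      unfolding covers_at_iff_append_Cons using C1 by blast
  qed
qed

lemma covers_at_code [code]:
  "covers_at C S i \<longleftrightarrow> list_ex (\<lambda>t. C ! t = S ! i \<and>
     subseq (take t C) (take i S) \<and> subseq (drop (Suc t) C) (drop (Suc i) S)) [0..<length C]"
  unfolding covers_at_def list_ex_iff by auto

lemma viable_prefix_code [code]:
  "viable_prefix P S \<longleftrightarrow> list_all (\<lambda>i. subseq P (take i S) \<or> covers_at P S i) [0..<length S]"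
  unfolding viable_prefix_def list_all_iff by auto

lemma s_cover_code [code]: "s_cover C S \<longleftrightarrow> list_all (covers_at C S) [0..<length S]"
  unfolding s_cover_iff_covers_at list_all_iff by auto

text \<open>Written as a disjunction: with an implication in its place, evaluation by code_simp
  becomes far slower.\<close>

fun no_cover_extending :: "nat \<Rightarrow> 'a list \<Rightarrow> 'a list \<Rightarrow> 'a list \<Rightarrow> bool" where
  "no_cover_extending 0 A S P \<longleftrightarrow> True"
| "no_cover_extending (Suc n) A S P \<longleftrightarrow>
     (\<forall>a \<in> set A. \<not> viable_prefix (P @ [a]) S \<or>
        \<not> s_cover (P @ [a]) S \<and> no_cover_extending n A S (P @ [a]))"

lemma no_cover_extending_sound:
  assumes "no_cover_extending n A S P" "s_cover (P @ Q) S"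
    "Q \<noteq> []" "length Q \<le> n" "set Q \<subseteq> set A"
  shows False
  using assms
proof (induction n arbitrary: P Q)
  case (Suc n)
  then obtain a Q' where Q: "Q = a # Q'" "a \<in> set A"
    by (cases Q) auto
  have "viable_prefix (take (Suc (length P)) (P @ Q)) S"
    using Suc.prems(2) by (rule viable_prefix_take)
  then have "viable_prefix (P @ [a]) S"
    using Q by simp
  then have "\<not> s_cover (P @ [a]) S" "no_cover_extending n A S (P @ [a])"
    using Suc.prems(1) Q by auto
  then show False
    using Suc.IH[of "P @ [a]" Q'] Suc.prems Q by (cases "Q' = []") auto
qed simp

lemma s_primitive_if_no_cover_extending:
  assumes "no_cover_extending (length S - 1) A S []" "set S \<subseteq> set A"
  shows "s_primitive S"
  unfolding s_primitive_iff
proof (intro allI impI)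
  fix C assume cov: "s_cover C S"
  show "length S \<le> length C"
  proof (rule ccontr)
    assume short: "\<not> length S \<le> length C"
    then have "S \<noteq> []"
      by auto
    with cov have "subseq C S"
      by (rule s_cover_imp_subseq)
    moreover have "C \<noteq> []"
      using cov \<open>S \<noteq> []\<close> unfolding s_cover_iff_covers_at covers_at_def by auto
    moreover have "set C \<subseteq> set A"
      using set_mono_subseq[OF \<open>subseq C S\<close>] assms(2) by blast
    moreover have "length C \<le> length S - 1"
      using short by simp
    ultimately show False
      using no_cover_extending_sound[of "length S - 1" A S "[]" C] assms(1) cov by simp
  qed
qed

definition base_word :: "nat list" where
  "base_word = [0,1,0,2,0,3,1,0,1,3,2,0,1,2,1,0,3,0,2]"

lemma s_primitive_base_word: "s_primitive base_word"
proof (rule s_primitive_if_no_cover_extending)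
  show "no_cover_extending (length base_word - 1) [0,1,2,3] base_word []"
    unfolding base_word_def by code_simp
  show "set base_word \<subseteq> set [0,1,2,3]"
    by (simp add: base_word_def)
qed

primrec doubled_word :: "nat \<Rightarrow> nat list" where
  "doubled_word 0 = base_word"
| "doubled_word (Suc n) = doubled_word n @ (n + 4) # doubled_word n"

lemma set_doubled_word: "set (doubled_word n) \<subseteq> {0..<n + 4}"
  by (induction n) (auto simp: base_word_def)

lemma length_doubled_word: "length (doubled_word n) = 5 * 2 ^ (n + 2) - 1"
  by (induction n) (auto simp: base_word_def)

lemma s_primitive_doubled_word: "s_primitive (doubled_word n)"
proof (induction n)
  case 0
  then show ?case by (simp add: s_primitive_base_word)
next
  case (Suc n)
  have "n + 4 \<notin> set (doubled_word n)"
    using set_doubled_word[of n] by auto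
  with Suc show ?case
    by (simp add: s_primitive_append_Cons)
qed

theorem mainTheorem2:
  fixes k :: nat
  assumes "k \<ge> 4"
  shows "gamma k \<ge> enat (5 * 2 ^ (k - 2) - 1)"
proof -
  obtain n where k: "k = n + 4"
    using assms by (metis add.commute le_add_diff_inverse)
  have "enat (length (doubled_word n)) \<le> gamma k"
    unfolding gamma_def k using set_doubled_word s_primitive_doubled_word
    by (intro Sup_upper) blast
  then show ?thesis
    by (simp add: k length_doubled_word)
qed

end
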